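(* $\mathrm{PMC}=\mathrm{PMC[T]}\subset\mathrm{PMC[O]}=\mathrm{PMC[T,O]}$, where $\subset$ denotes proper inclusion.
   Context: An indexed family is a sequence $\mathcal F=(F_n)_{n\in\mathbb N}$ of subsets of $\mathbb N$ that is uniformly computably enumerable; $F\in\mathcal F$ means $F=F_n$ for some $n$, and $\mathrm{mi}_{\mathcal F}(F)$ is the least $n$ with $F_n=F$. An enumeration of a nonempty set $A$ is an infinite sequence of elements of $A$ in which every element of $A$ occurs; $f\restriction n$ is its initial segment of length $n$, and $\mathrm{content}(\sigma)$ is the set of entries of a finite string $\sigma$. A learner is a partial computable function from finite strings of naturals to naturals; hypothesis $h$ is interpreted as $F_h$. $\mathcal F$ is PMC-learnable if there are a learner $M$ and a polynomial $p$ such that for every $F\in\mathcal F$ and every enumeration $f$ of $F$, the hypothesis stream $g(i)=M(f\restriction i)$ satisfies $|\{i: g(i)\neq g(i+1)\}|\le p(\mathrm{mi}_{\mathcal F}(F))$ and the only value occurring infinitely often in $g$ is an index of $F$; if an oracle is used, the number of oracle queries is also bounded by $p(\mathrm{mi}_{\mathcal F}(F))$. A teacher is a computable map $T$ on finite strings with $T(\sigma)$ a prefix of $T(\tau)$ whenever $\sigma$ is a prefix of $\tau$, and $\mathrm{content}(T(\sigma))\subseteq\mathrm{content}(\sigma)$. PMC[O]-learnable: some learner with a membership oracle for the target set PMC-learns $\mathcal F$. PMC[T]-learnable: there is a learner-teacher pair $(M,T)$ such that $M$, fed $T(f\restriction n)$ in place of $f\restriction n$, meets the PMC criterion for every enumeration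 $f$ of every member of $\mathcal F$. PMC[T,O]-learnable: as for PMC[T], but $M$ additionally has a membership oracle for the target and $T$ has access to the oracle answers $M$ receives. PMC, PMC[O], PMC[T], PMC[T,O] denote the corresponding classes of indexed families. *)

theory Defs
  imports Main "HOL-Library.Nat_Bijection" "HOL-Library.Sublist"
    "HOL-Computational_Algebra.Polynomial"
begin

datatype recf = Z | S | Proj nat | Comp recf "recf list" | Prec recf recf | Mn recf

inductive eval :: "recf \<Rightarrow> nat list \<Rightarrow> nat \<Rightarrow> bool" where
  eval_Z: "eval Z xs 0"
| eval_S: "eval S (x # xs) (Suc x)"
| eval_Proj: "i < length xs \<Longrightarrow> eval (Proj i) xs (xs ! i)"
| eval_Comp: "list_all2 (\<lambda>g y. eval g xs y) gs ys \<Longrightarrow> eval f ys v \<Longrightarrow> eval (Comp f gs) xs v"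
| eval_Prec0: "eval f xs v \<Longrightarrow> eval (Prec f g) (0 # xs) v"
| eval_PrecS: "eval (Prec f g) (n # xs) r \<Longrightarrow> eval g (r # n # xs) v
               \<Longrightarrow> eval (Prec f g) (Suc n # xs) v"
| eval_Mn: "eval f (n # xs) 0 \<Longrightarrow> (\<forall>m<n. \<exists>r. eval f (m # xs) r \<and> r \<noteq> 0)
               \<Longrightarrow> eval (Mn f) xs n"

text \<open>Uniformly computably enumerable: F_n = domain of \<lambda>x. phi(n,x) for one partial
  computable phi.\<close>
definition indexed_family :: "(nat \<Rightarrow> nat set) \<Rightarrow> bool" where
  "indexed_family fam \<longleftrightarrow> (\<exists>e. \<forall>n x. x \<in> fam n \<longleftrightarrow> (\<exists>v. eval e [n, x] v))"

definition mi :: "(nat \<Rightarrow> nat set) \<Rightarrow> nat set \<Rightarrow> nat" where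
  "mi fam F = (LEAST n. fam n = F)"

definition seg :: "(nat \<Rightarrow> nat) \<Rightarrow> nat \<Rightarrow> nat list" where
  "seg f n = map f [0..<n]"

definition good_stream :: "(nat \<Rightarrow> nat set) \<Rightarrow> nat set \<Rightarrow> nat poly \<Rightarrow> (nat \<Rightarrow> nat) \<Rightarrow> bool" where
  "good_stream fam F p g \<longleftrightarrow>
     finite {i. g i \<noteq> g (Suc i)} \<and>
     card {i. g i \<noteq> g (Suc i)} \<le> poly p (mi fam F) \<and>
     (\<forall>v. infinite {i. g i = v} \<longrightarrow> fam v = F)"

definition teacher :: "(nat list \<Rightarrow> nat list) \<Rightarrow> bool" where
  "teacher T \<longleftrightarrow>
     (\<exists>t. \<forall>\<sigma>. eval t [list_encode \<sigma>] (list_encode (T \<sigma>))) \<and>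
     (\<forall>\<sigma> \<tau>. prefix \<sigma> \<tau> \<longrightarrow> prefix (T \<sigma>) (T \<tau>)) \<and>
     (\<forall>\<sigma>. set (T \<sigma>) \<subseteq> set \<sigma>)"

text \<open>A query log records the queried numbers together with the oracle answers.\<close>
type_synonym qlog = "(nat \<times> bool) list"

definition enc_log :: "qlog \<Rightarrow> nat" where
  "enc_log l = list_encode (map (\<lambda>(x, b). prod_encode (x, if b then 1 else 0)) l)"

text \<open>An oracle learner with code e is called on (data string, query log so far). An
  output 2*h means "hypothesis h", an output 2*x+1 means "query whether x is in the
  target". qrun e A \<sigma> l l' h: starting from log l on data \<sigma>, with membership oracle A,
  the learner eventually outputs hypothesis h, and the log is then l'.\<close>
inductive qrun :: "recf \<Rightarrow> nat set \<Rightarrow> nat list \<Rightarrow> qlog \<Rightarrow> qlog \<Rightarrow> nat \<Rightarrow> bool" where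
  qrun_hyp: "eval e [list_encode \<sigma>, enc_log l] (2 * h) \<Longrightarrow> qrun e A \<sigma> l l h"
| qrun_query: "eval e [list_encode \<sigma>, enc_log l] (2 * x + 1) \<Longrightarrow>
               qrun e A \<sigma> (l @ [(x, x \<in> A)]) l' h \<Longrightarrow> qrun e A \<sigma> l l' h"

text \<open>A teacher with access to the oracle answers the learner received.\<close>
definition oteacher :: "(nat list \<Rightarrow> qlog \<Rightarrow> nat list) \<Rightarrow> bool" where
  "oteacher T \<longleftrightarrow>
     (\<exists>t. \<forall>\<sigma> l. eval t [list_encode \<sigma>, enc_log l] (list_encode (T \<sigma> l))) \<and>
     (\<forall>\<sigma> \<tau> l l'. prefix \<sigma> \<tau> \<longrightarrow> prefix l l' \<longrightarrow> prefix (T \<sigma> l) (T \<tau> l')) \<and>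
     (\<forall>\<sigma> l. set (T \<sigma> l) \<subseteq> set \<sigma>)"

definition PMC_learnable :: "(nat \<Rightarrow> nat set) \<Rightarrow> bool" where
  "PMC_learnable fam \<longleftrightarrow> (\<exists>e p. \<forall>F \<in> range fam. \<forall>f. range f = F \<longrightarrow>
     (\<exists>g. (\<forall>i. eval e [list_encode (seg f i)] (g i)) \<and> good_stream fam F p g))"

definition PMC_T_learnable :: "(nat \<Rightarrow> nat set) \<Rightarrow> bool" where
  "PMC_T_learnable fam \<longleftrightarrow> (\<exists>e p T. teacher T \<and> (\<forall>F \<in> range fam. \<forall>f. range f = F \<longrightarrow>
     (\<exists>g. (\<forall>i. eval e [list_encode (T (seg f i))] (g i)) \<and> good_stream fam F p g)))"

definition PMC_O_learnable :: "(nat \<Rightarrow> nat set) \<Rightarrow> bool" where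
  "PMC_O_learnable fam \<longleftrightarrow> (\<exists>e p. \<forall>F \<in> range fam. \<forall>f. range f = F \<longrightarrow>
     (\<exists>L g. L 0 = [] \<and> (\<forall>i. qrun e F (seg f i) (L i) (L (Suc i)) (g i)) \<and>
            good_stream fam F p g \<and> (\<forall>i. length (L i) \<le> poly p (mi fam F))))"

definition PMC_TO_learnable :: "(nat \<Rightarrow> nat set) \<Rightarrow> bool" where
  "PMC_TO_learnable fam \<longleftrightarrow> (\<exists>e p T. oteacher T \<and> (\<forall>F \<in> range fam. \<forall>f. range f = F \<longrightarrow>
     (\<exists>L g. L 0 = [] \<and> (\<forall>i. qrun e F (T (seg f i) (L i)) (L i) (L (Suc i)) (g i)) \<and>
            good_stream fam F p g \<and> (\<forall>i. length (L i) \<le> poly p (mi fam F)))))"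

definition PMC :: "(nat \<Rightarrow> nat set) set" where
  "PMC = {fam. indexed_family fam \<and> PMC_learnable fam}"
definition PMC_T :: "(nat \<Rightarrow> nat set) set" where
  "PMC_T = {fam. indexed_family fam \<and> PMC_T_learnable fam}"
definition PMC_O :: "(nat \<Rightarrow> nat set) set" where
  "PMC_O = {fam. indexed_family fam \<and> PMC_O_learnable fam}"
definition PMC_TO :: "(nat \<Rightarrow> nat set) set" where
  "PMC_TO = {fam. indexed_family fam \<and> PMC_TO_learnable fam}"

end

theory Submission
  imports Defs "HOL-Library.Countable_Set"
begin

text \<open>
  A computable teacher can be absorbed into the learner, which applies the teacher's program to the
  data itself; so PMC[T] = PMC. With an oracle, the teacher also sees the query log at the start of
  the current round, which the learner is not given. The learner can recompute it: the current log
  extends the logs of all earlier rounds, so replaying rounds 0, 1, ..., i - 1 of the original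
  learner on prefixes of the current log recovers where each of them ended; hence PMC[T,O] = PMC[O].
  A learner can ignore its oracle, so PMC \<subseteq> PMC[O].

  The separating family consists of \<nat> (index 0) and the sets {1, ..., n} (index n \<ge> 1). With
  membership queries it is learned by asking 0, 1, 2, ... until an answer reveals the target, using
  at most n + 2 queries and no mind change. Without queries, the learner converges on every text,
  so there are texts for {1}, {1, 2}, ..., {1, ..., c + 1}, each extending the previous one, on
  which it has converged; continuing the last one to a text for \<nat> forces c + 1 mind changes on
  a target of index 0, more than the bound p(0) = c permits.
\<close>

section \<open>Recursive programs\<close>

inductive_cases eval_ZE: "eval Z xs v"
inductive_cases eval_SE: "eval S xs v"
inductive_cases eval_ProjE: "eval (Proj i) xs v"
inductive_cases eval_CompE: "eval (Comp f gs) xs v"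
inductive_cases eval_Prec0E: "eval (Prec f g) (0 # xs) v"
inductive_cases eval_PrecSE: "eval (Prec f g) (Suc n # xs) v"
inductive_cases eval_MnE: "eval (Mn f) xs v"

lemma list_all2_eval_deterministic:
  "list_all2 (\<lambda>g y. eval g xs y \<and> (\<forall>w. eval g xs w \<longrightarrow> y = w)) gs ys \<Longrightarrow>
   list_all2 (\<lambda>g y. eval g xs y) gs ys' \<Longrightarrow> ys = ys'"
proof (induction gs arbitrary: ys ys')
  case (Cons a gs)
  then obtain y yr y' yr' where "ys = y # yr" "ys' = y' # yr'"
    by (cases ys; cases ys') auto
  with Cons show ?case by auto
qed simp

lemma eval_deterministic: "eval c xs v \<Longrightarrow> eval c xs w \<Longrightarrow> v = w"
proof (induction arbitrary: w rule: eval.induct)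
  case (eval_Z xs) thus ?case by (metis eval_ZE)
next
  case (eval_S x xs) thus ?case by (metis eval_SE list.inject)
next
  case (eval_Proj i xs) thus ?case by (metis eval_ProjE)
next
  case (eval_Comp xs gs ys f v)
  from eval_Comp.prems obtain ys' where "list_all2 (\<lambda>g y. eval g xs y) gs ys'" "eval f ys' w"
    by (auto elim: eval_CompE)
  with eval_Comp.IH list_all2_eval_deterministic show ?case by blast
next
  case (eval_Prec0 f xs v g)
  thus ?case by (metis eval_Prec0E)
next
  case (eval_PrecS f g n xs r v)
  from eval_PrecS.prems obtain r' where "eval (Prec f g) (n # xs) r'" "eval g (r' # n # xs) w"
    by (auto elim: eval_PrecSE)
  thus ?case using eval_PrecS.IH by metis
next
  case (eval_Mn f n xs)
  from eval_Mn.prems have w0: "eval f (w # xs) 0" and below_w: "\<forall>m<w. \<exists>r. eval f (m # xs) r \<and> r \<noteq> 0"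
    by (auto elim: eval_MnE)
  show ?case
  proof (rule linorder_cases[of n w])
    assume "n < w"
    with below_w eval_Mn.IH(1) show ?thesis by blast
  next
    assume "w < n"
    with eval_Mn.IH(2) w0 show ?thesis by blast
  qed
qed

lemma eval_Prec_upto:
  assumes "eval f xs (h 0)" and "\<And>n. n < N \<Longrightarrow> eval g (h n # n # xs) (h (Suc n))" and "n \<le> N"
  shows "eval (Prec f g) (n # xs) (h n)"
  using \<open>n \<le> N\<close>
proof (induction n)
  case 0 show ?case by (rule eval_Prec0[OF assms(1)])
next
  case (Suc n) thus ?case using assms(2) eval_PrecS by simp
qed

lemma eval_PrecI:
  assumes "eval f xs (h 0)" and "\<And>n. eval g (h n # n # xs) (h (Suc n))"
  shows "eval (Prec f g) (n # xs) (h n)"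
  using eval_Prec_upto[of f xs h n g] assms by blast

lemma eval_Comp_unary: "eval a xs x \<Longrightarrow> eval f [x] v \<Longrightarrow> eval (Comp f [a]) xs v"
  by (rule eval_Comp) auto

lemma eval_Comp_binary:
  "eval a xs x \<Longrightarrow> eval b xs y \<Longrightarrow> eval f [x, y] v \<Longrightarrow> eval (Comp f [a, b]) xs v"
  by (rule eval_Comp) auto

lemma eval_Comp_ternary:
  "eval a xs x \<Longrightarrow> eval b xs y \<Longrightarrow> eval c xs z \<Longrightarrow> eval f [x, y, z] v \<Longrightarrow>
   eval (Comp f [a, b, c]) xs v"
  by (rule eval_Comp) auto

lemma eval_Proj_nth: "i < length xs \<Longrightarrow> xs ! i = v \<Longrightarrow> eval (Proj i) xs v"
  using eval_Proj by blast

lemma eval_Proj0: "eval (Proj 0) (x # xs) x"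
  by (simp add: eval_Proj_nth)
lemma eval_Proj1: "eval (Proj 1) (x # y # xs) y"
  by (simp add: eval_Proj_nth)
lemma eval_Proj2: "eval (Proj 2) (x # y # z # xs) z"
  by (simp add: eval_Proj_nth)
lemma eval_Proj3: "eval (Proj 3) (x # y # z # u # xs) u"
  by (simp add: eval_Proj_nth numeral_eq_Suc)
lemma eval_Proj4: "eval (Proj 4) (x # y # z # u # w # xs) w"
  by (simp add: eval_Proj_nth numeral_eq_Suc)

primrec cnst :: "nat \<Rightarrow> recf" where
  "cnst 0 = Z"
| "cnst (Suc k) = Comp S [cnst k]"

lemma eval_cnst: "eval (cnst k) xs k"
  by (induction k) (auto intro: eval_Z eval_Comp_unary eval_S)

definition add_code :: recf where
  "add_code = Comp (Prec (Proj 0) (Comp S [Proj 0])) [Proj 1, Proj 0]"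

lemma eval_add_code: "eval add_code [a, b] (a + b)"
proof -
  have "eval (Prec (Proj 0) (Comp S [Proj 0])) [n, a] (a + n)" for n
    by (rule eval_PrecI) (auto intro: eval_Proj0 eval_Comp_unary eval_S)
  thus ?thesis
    unfolding add_code_def by (rule eval_Comp_binary[OF eval_Proj1 eval_Proj0])
qed

definition rf_add :: "recf \<Rightarrow> recf \<Rightarrow> recf" where
  "rf_add a b = Comp add_code [a, b]"

lemma eval_rf_add: "eval a xs x \<Longrightarrow> eval b xs y \<Longrightarrow> eval (rf_add a b) xs (x + y)"
  unfolding rf_add_def by (rule eval_Comp_binary[OF _ _ eval_add_code])

definition mul_code :: recf where
  "mul_code = Comp (Prec Z (rf_add (Proj 2) (Proj 0))) [Proj 1, Proj 0]"

lemma eval_mul_code: "eval mul_code [a, b] (a * b)"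
proof -
  have "eval (Prec Z (rf_add (Proj 2) (Proj 0))) [n, a] (a * n)" for n
    by (rule eval_PrecI) (auto intro: eval_Z eval_rf_add eval_Proj0 eval_Proj2)
  thus ?thesis
    unfolding mul_code_def by (rule eval_Comp_binary[OF eval_Proj1 eval_Proj0])
qed

definition rf_mul :: "recf \<Rightarrow> recf \<Rightarrow> recf" where
  "rf_mul a b = Comp mul_code [a, b]"

lemma eval_rf_mul: "eval a xs x \<Longrightarrow> eval b xs y \<Longrightarrow> eval (rf_mul a b) xs (x * y)"
  unfolding rf_mul_def by (rule eval_Comp_binary[OF _ _ eval_mul_code])

definition pred_code :: recf where
  "pred_code = Comp (Prec Z (Proj 1)) [Proj 0]"

lemma eval_pred_code: "eval pred_code [a] (a - 1)"
proof -
  have "eval (Prec Z (Proj 1)) [n] (n - 1)" for n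
    by (rule eval_PrecI[where h = "\<lambda>n. n - 1"]) (auto intro!: eval_Z eval_Proj_nth)
  thus ?thesis
    unfolding pred_code_def by (rule eval_Comp_unary[OF eval_Proj0])
qed

definition monus_code :: recf where
  "monus_code = Comp (Prec (Proj 0) (Comp pred_code [Proj 0])) [Proj 1, Proj 0]"

lemma eval_monus_code: "eval monus_code [a, b] (a - b)"
proof -
  have "eval (Prec (Proj 0) (Comp pred_code [Proj 0])) [n, a] (a - n)" for n
  proof (rule eval_PrecI[where h = "\<lambda>n. a - n"])
    fix n
    show "eval (Comp pred_code [Proj 0]) [a - n, n, a] (a - Suc n)"
      using eval_Comp_unary[OF eval_Proj0 eval_pred_code] by (metis diff_Suc_eq_diff_pred diff_commute)
  qed (simp add: eval_Proj0)
  thus ?thesis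
    unfolding monus_code_def by (rule eval_Comp_binary[OF eval_Proj1 eval_Proj0])
qed

definition rf_sub :: "recf \<Rightarrow> recf \<Rightarrow> recf" where
  "rf_sub a b = Comp monus_code [a, b]"

lemma eval_rf_sub: "eval a xs x \<Longrightarrow> eval b xs y \<Longrightarrow> eval (rf_sub a b) xs (x - y)"
  unfolding rf_sub_def by (rule eval_Comp_binary[OF _ _ eval_monus_code])

definition rf_suc :: "recf \<Rightarrow> recf" where
  "rf_suc a = Comp S [a]"

lemma eval_rf_suc: "eval a xs x \<Longrightarrow> eval (rf_suc a) xs (Suc x)"
  unfolding rf_suc_def by (rule eval_Comp_unary[OF _ eval_S])

(* Both branches are evaluated, so both must be defined even where they are not selected. *)
definition rf_if0 :: "recf \<Rightarrow> recf \<Rightarrow> recf \<Rightarrow> recf" where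
  "rf_if0 c a b =
    rf_add (rf_mul (rf_sub (cnst 1) c) a) (rf_mul (rf_sub (cnst 1) (rf_sub (cnst 1) c)) b)"

lemma eval_rf_if0:
  assumes "eval c xs z" "eval a xs x" "eval b xs y"
  shows "eval (rf_if0 c a b) xs (if z = 0 then x else y)"
proof -
  have "eval (rf_if0 c a b) xs ((1 - z) * x + (1 - (1 - z)) * y)"
    unfolding rf_if0_def by (intro eval_rf_add eval_rf_mul eval_rf_sub eval_cnst assms)
  moreover have "(1 - z) * x + (1 - (1 - z)) * y = (if z = 0 then x else y)"
    by (cases z) auto
  ultimately show ?thesis by simp
qed

definition rf_mod2 :: "recf \<Rightarrow> recf" where
  "rf_mod2 a = Comp (Prec Z (rf_sub (cnst 1) (Proj 0))) [a]"

lemma eval_rf_mod2: "eval a xs x \<Longrightarrow> eval (rf_mod2 a) xs (x mod 2)"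
proof -
  have "eval (Prec Z (rf_sub (cnst 1) (Proj 0))) [n] (n mod 2)" for n
  proof (rule eval_PrecI[where h = "\<lambda>n. n mod 2"])
    fix n :: nat
    have "1 - n mod 2 = Suc n mod 2" by (cases "even n") (simp_all add: mod_Suc)
    thus "eval (rf_sub (cnst 1) (Proj 0)) [n mod 2, n] (Suc n mod 2)"
      using eval_rf_sub[OF eval_cnst eval_Proj0] by metis
  qed (simp add: eval_Z)
  thus "eval a xs x \<Longrightarrow> eval (rf_mod2 a) xs (x mod 2)"
    unfolding rf_mod2_def using eval_Comp_unary by blast
qed

definition rf_triangle :: "recf \<Rightarrow> recf" where
  "rf_triangle a = Comp (Prec Z (rf_add (Proj 0) (rf_suc (Proj 1)))) [a]"

lemma eval_rf_triangle: "eval a xs x \<Longrightarrow> eval (rf_triangle a) xs (triangle x)"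
proof -
  have "eval (Prec Z (rf_add (Proj 0) (rf_suc (Proj 1)))) [n] (triangle n)" for n
  proof (rule eval_PrecI)
    fix n
    show "eval (rf_add (Proj 0) (rf_suc (Proj 1))) [triangle n, n] (triangle (Suc n))"
      using eval_rf_add[OF eval_Proj0 eval_rf_suc[OF eval_Proj1]] by simp
  qed (simp add: eval_Z)
  thus "eval a xs x \<Longrightarrow> eval (rf_triangle a) xs (triangle x)"
    unfolding rf_triangle_def using eval_Comp_unary by blast
qed

definition rf_pair :: "recf \<Rightarrow> recf \<Rightarrow> recf" where
  "rf_pair a b = rf_add (rf_triangle (rf_add a b)) a"

lemma eval_rf_pair: "eval a xs x \<Longrightarrow> eval b xs y \<Longrightarrow> eval (rf_pair a b) xs (prod_encode (x, y))"
  unfolding rf_pair_def prod_encode_def by (auto intro!: eval_rf_add eval_rf_triangle)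

definition triangle_root :: "nat \<Rightarrow> nat" where
  "triangle_root n = (LEAST w. n < triangle (Suc w))"

lemma triangle_root_bounds: "triangle (triangle_root n) \<le> n" "n < triangle (Suc (triangle_root n))"
proof -
  have ex: "n < triangle (Suc n)" by simp
  show "n < triangle (Suc (triangle_root n))"
    unfolding triangle_root_def using ex by (rule LeastI)
  show "triangle (triangle_root n) \<le> n"
  proof (cases "triangle_root n")
    case (Suc k)
    hence "\<not> n < triangle (Suc k)"
      unfolding triangle_root_def by (intro not_less_Least) simp
    thus ?thesis using Suc by simp
  qed simp
qed

lemma prod_decode_triangle_root:
  "prod_decode n = (n - triangle (triangle_root n), triangle_root n - (n - triangle (triangle_root n)))"
proof -
  let ?w = "triangle_root n" let ?a = "n - triangle ?w"
  have "?a \<le> ?w" using triangle_root_bounds[of n] by simp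
  hence "prod_encode (?a, ?w - ?a) = n"
    using triangle_root_bounds[of n] by (simp add: prod_encode_def)
  thus ?thesis by (metis prod_encode_inverse)
qed

definition rf_triangle_root :: "recf \<Rightarrow> recf" where
  "rf_triangle_root a = Comp (Mn (rf_sub (rf_suc (Proj 1)) (rf_triangle (rf_suc (Proj 0))))) [a]"

lemma eval_rf_triangle_root: "eval a xs x \<Longrightarrow> eval (rf_triangle_root a) xs (triangle_root x)"
proof -
  let ?f = "rf_sub (rf_suc (Proj 1)) (rf_triangle (rf_suc (Proj 0)))"
  have f: "eval ?f [m, n] (Suc n - triangle (Suc m))" for m n
    by (intro eval_rf_sub eval_rf_suc eval_rf_triangle eval_Proj0 eval_Proj1)
  have "eval (Mn ?f) [n] (triangle_root n)" for n
  proof (rule eval_Mn)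
    show "eval ?f [triangle_root n, n] 0"
      using f[of "triangle_root n" n] triangle_root_bounds(2)[of n] by simp
    show "\<forall>m<triangle_root n. \<exists>r. eval ?f [m, n] r \<and> r \<noteq> 0"
    proof (intro allI impI)
      fix m assume "m < triangle_root n"
      hence "\<not> n < triangle (Suc m)" unfolding triangle_root_def by (rule not_less_Least)
      thus "\<exists>r. eval ?f [m, n] r \<and> r \<noteq> 0" using f[of m n] by auto
    qed
  qed
  thus "eval a xs x \<Longrightarrow> eval (rf_triangle_root a) xs (triangle_root x)"
    unfolding rf_triangle_root_def using eval_Comp_unary by blast
qed

definition rf_fst :: "recf \<Rightarrow> recf" where
  "rf_fst a = rf_sub a (rf_triangle (rf_triangle_root a))"
definition rf_snd :: "recf \<Rightarrow> recf" where
  "rf_snd a = rf_sub (rf_triangle_root a) (rf_fst a)"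

lemma eval_rf_fst: "eval a xs x \<Longrightarrow> eval (rf_fst a) xs (fst (prod_decode x))"
  unfolding rf_fst_def prod_decode_triangle_root[of x]
  by (auto intro!: eval_rf_sub eval_rf_triangle eval_rf_triangle_root)

lemma eval_rf_snd: "eval a xs x \<Longrightarrow> eval (rf_snd a) xs (snd (prod_decode x))"
proof -
  assume "eval a xs x"
  hence "eval (rf_snd a) xs (triangle_root x - fst (prod_decode x))"
    unfolding rf_snd_def by (intro eval_rf_sub eval_rf_triangle_root eval_rf_fst)
  thus ?thesis by (simp add: prod_decode_triangle_root[of x])
qed

lemma prod_decode_0: "prod_decode 0 = (0, 0)"
  using prod_encode_inverse[of "(0, 0)"] by (simp add: prod_encode_def)

definition rf_tl :: "recf \<Rightarrow> recf" where
  "rf_tl a = rf_snd (rf_sub a (cnst 1))"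

lemma eval_rf_tl: "eval a xs (list_encode ys) \<Longrightarrow> eval (rf_tl a) xs (list_encode (tl ys))"
proof -
  assume "eval a xs (list_encode ys)"
  hence "eval (rf_tl a) xs (snd (prod_decode (list_encode ys - 1)))"
    unfolding rf_tl_def by (intro eval_rf_snd eval_rf_sub eval_cnst)
  thus ?thesis by (cases ys) (simp_all add: prod_decode_0)
qed

definition rf_drop :: "recf \<Rightarrow> recf \<Rightarrow> recf" where
  "rf_drop k a = Comp (Prec (Proj 0) (rf_tl (Proj 0))) [k, a]"

lemma eval_rf_drop:
  assumes "eval k xs n" "eval a xs (list_encode ys)"
  shows "eval (rf_drop k a) xs (list_encode (drop n ys))"
proof -
  have "eval (Prec (Proj 0) (rf_tl (Proj 0))) [m, list_encode ys] (list_encode (drop m ys))" for m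
  proof (rule eval_PrecI[where h = "\<lambda>m. list_encode (drop m ys)"])
    fix m
    show "eval (rf_tl (Proj 0)) [list_encode (drop m ys), m, list_encode ys] (list_encode (drop (Suc m) ys))"
      using eval_rf_tl[OF eval_Proj0, of "drop m ys"] by (simp add: tl_drop drop_Suc)
  qed (simp add: eval_Proj0)
  thus ?thesis unfolding rf_drop_def using assms by (intro eval_Comp_binary)
qed

definition rf_nth :: "recf \<Rightarrow> recf \<Rightarrow> recf" where
  "rf_nth k a = rf_fst (rf_sub (rf_drop k a) (cnst 1))"

lemma eval_rf_nth:
  assumes "eval k xs n" "eval a xs (list_encode ys)"
  shows "eval (rf_nth k a) xs (if n < length ys then ys ! n else 0)"
proof -
  have "eval (rf_nth k a) xs (fst (prod_decode (list_encode (drop n ys) - 1)))"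
    unfolding rf_nth_def by (intro eval_rf_fst eval_rf_sub eval_rf_drop eval_cnst assms)
  moreover have "fst (prod_decode (list_encode (drop n ys) - 1)) = (if n < length ys then ys ! n else 0)"
    by (cases "n < length ys") (simp_all add: Cons_nth_drop_Suc[symmetric] prod_decode_0)
  ultimately show ?thesis by simp
qed

definition rf_length :: "recf \<Rightarrow> recf" where
  "rf_length a = Comp (Mn (rf_drop (Proj 0) (Proj 1))) [a]"

lemma eval_rf_length: "eval a xs (list_encode ys) \<Longrightarrow> eval (rf_length a) xs (length ys)"
proof -
  have drop: "eval (rf_drop (Proj 0) (Proj 1)) [m, list_encode ys] (list_encode (drop m ys))" for m
    by (intro eval_rf_drop eval_Proj0 eval_Proj1)
  have "eval (Mn (rf_drop (Proj 0) (Proj 1))) [list_encode ys] (length ys)"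
  proof (rule eval_Mn)
    show "eval (rf_drop (Proj 0) (Proj 1)) [length ys, list_encode ys] 0"
      using drop[of "length ys"] by simp
    show "\<forall>m<length ys. \<exists>r. eval (rf_drop (Proj 0) (Proj 1)) [m, list_encode ys] r \<and> r \<noteq> 0"
    proof (intro allI impI)
      fix m assume "m < length ys"
      then obtain z zs where "drop m ys = z # zs" by (cases "drop m ys") auto
      thus "\<exists>r. eval (rf_drop (Proj 0) (Proj 1)) [m, list_encode ys] r \<and> r \<noteq> 0"
        using drop[of m] by auto
    qed
  qed
  thus "eval a xs (list_encode ys) \<Longrightarrow> eval (rf_length a) xs (length ys)"
    unfolding rf_length_def using eval_Comp_unary by blast
qed

definition rf_take :: "recf \<Rightarrow> recf \<Rightarrow> recf" where
  "rf_take k a = Comp (Prec Z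
    (rf_suc (rf_pair (rf_nth (rf_sub (rf_sub (Proj 2) (cnst 1)) (Proj 1)) (Proj 3)) (Proj 0))))
  [k, k, a]"

(* The prefix is assembled back to front: after i steps the accumulator is drop (n - i) (take n ys). *)
lemma eval_rf_take:
  assumes k: "eval k xs n" and a: "eval a xs (list_encode ys)" and n: "n \<le> length ys"
  shows "eval (rf_take k a) xs (list_encode (take n ys))"
proof -
  let ?acc = "\<lambda>i. list_encode (drop (n - i) (take n ys))"
  let ?step = "rf_suc (rf_pair (rf_nth (rf_sub (rf_sub (Proj 2) (cnst 1)) (Proj 1)) (Proj 3)) (Proj 0))"
  have "eval (Prec Z ?step) [n, n, list_encode ys] (?acc n)"
  proof (rule eval_Prec_upto[where N = n and h = ?acc])
    fix i assume i: "i < n"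
    have "drop (n - Suc i) (take n ys) = ys ! (n - 1 - i) # drop (n - i) (take n ys)"
      using i n Cons_nth_drop_Suc[of "n - Suc i" "take n ys"] by (simp add: Suc_diff_Suc)
    moreover have "eval ?step [?acc i, i, n, list_encode ys]
        (Suc (prod_encode (if n - 1 - i < length ys then ys ! (n - 1 - i) else 0, ?acc i)))"
      by (intro eval_rf_suc eval_rf_pair eval_rf_nth eval_rf_sub eval_cnst
          eval_Proj0 eval_Proj1 eval_Proj2 eval_Proj3)
    moreover have "n - 1 - i < length ys" using i n by simp
    ultimately show "eval ?step [?acc i, i, n, list_encode ys] (?acc (Suc i))"
      by (simp add: diff_diff_left)
  qed (simp_all add: eval_Z)
  thus ?thesis unfolding rf_take_def by (simp add: eval_Comp_ternary[OF k k a])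
qed

section \<open>Inclusions witnessed by a direct simulation\<close>

lemma teacher_id: "teacher (\<lambda>\<sigma>. \<sigma>)"
  unfolding teacher_def by (auto intro: eval_Proj0)

lemma oteacher_id: "oteacher (\<lambda>\<sigma> l. \<sigma>)"
  unfolding oteacher_def by (auto intro: eval_Proj0)

lemma PMC_learnable_imp_PMC_T_learnable: "PMC_learnable fam \<Longrightarrow> PMC_T_learnable fam"
  unfolding PMC_learnable_def PMC_T_learnable_def
  by (elim exE) (rule exI, rule exI, rule exI[of _ "\<lambda>\<sigma>. \<sigma>"], rule conjI[OF teacher_id])

lemma PMC_T_learnable_imp_PMC_learnable:
  assumes "PMC_T_learnable fam" shows "PMC_learnable fam"
proof -
  obtain e p T where "teacher T" and learns: "\<forall>F \<in> range fam. \<forall>f. range f = F \<longrightarrow>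
     (\<exists>g. (\<forall>i. eval e [list_encode (T (seg f i))] (g i)) \<and> good_stream fam F p g)"
    using assms unfolding PMC_T_learnable_def by blast
  then obtain t where t: "\<And>\<sigma>. eval t [list_encode \<sigma>] (list_encode (T \<sigma>))"
    unfolding teacher_def by blast
  show ?thesis unfolding PMC_learnable_def
  proof (intro exI[of _ "Comp e [t]"] exI[of _ p] ballI allI impI)
    fix F and f :: "nat \<Rightarrow> nat" assume "F \<in> range fam" "range f = F"
    with learns obtain g where "\<forall>i. eval e [list_encode (T (seg f i))] (g i)" "good_stream fam F p g"
      by blast
    thus "\<exists>g. (\<forall>i. eval (Comp e [t]) [list_encode (seg f i)] (g i)) \<and> good_stream fam F p g"
      using eval_Comp_unary[OF t] by blast
  qed
qed

lemma PMC_learnable_imp_PMC_O_learnable: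
  assumes "PMC_learnable fam" shows "PMC_O_learnable fam"
proof -
  obtain e p where learns: "\<forall>F \<in> range fam. \<forall>f. range f = F \<longrightarrow>
     (\<exists>g. (\<forall>i. eval e [list_encode (seg f i)] (g i)) \<and> good_stream fam F p g)"
    using assms unfolding PMC_learnable_def by blast
  let ?e = "rf_add (Comp e [Proj 0]) (Comp e [Proj 0])"
  have no_queries: "qrun ?e F \<sigma> [] [] h" if "eval e [list_encode \<sigma>] h" for F \<sigma> h
    using eval_rf_add[OF eval_Comp_unary[OF eval_Proj0 that] eval_Comp_unary[OF eval_Proj0 that]]
    by (intro qrun_hyp) (simp add: mult_2)
  show ?thesis unfolding PMC_O_learnable_def
  proof (intro exI[of _ ?e] exI[of _ p] ballI allI impI)
    fix F and f :: "nat \<Rightarrow> nat" assume "F \<in> range fam" "range f = F"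
    with learns obtain g where "\<forall>i. eval e [list_encode (seg f i)] (g i)" "good_stream fam F p g"
      by blast
    thus "\<exists>L g. L 0 = [] \<and> (\<forall>i. qrun ?e F (seg f i) (L i) (L (Suc i)) (g i)) \<and>
        good_stream fam F p g \<and> (\<forall>i. length (L i) \<le> poly p (mi fam F))"
      using no_queries by (intro exI[of _ "\<lambda>_. []"] exI[of _ g]) simp
  qed
qed

lemma PMC_O_learnable_imp_PMC_TO_learnable: "PMC_O_learnable fam \<Longrightarrow> PMC_TO_learnable fam"
  unfolding PMC_O_learnable_def PMC_TO_learnable_def
  by (elim exE) (rule exI, rule exI, rule exI[of _ "\<lambda>\<sigma> l. \<sigma>"], rule conjI[OF oteacher_id])

section \<open>A family learnable with membership queries\<close>

lemma mi_inj: "inj fam \<Longrightarrow> mi fam (fam n) = n"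
  unfolding mi_def by (rule Least_equality) (simp_all add: inj_eq)

definition upto_family :: "nat \<Rightarrow> nat set" where
  "upto_family n = (if n = 0 then UNIV else {1..n})"

lemma inj_upto_family: "inj upto_family"
proof (rule injI)
  fix a b assume eq: "upto_family a = upto_family b"
  have "0 \<in> upto_family n \<longleftrightarrow> n = 0" for n by (simp add: upto_family_def)
  hence "a = 0 \<longleftrightarrow> b = 0" using eq by blast
  moreover have "{1..a} = {1..b}" if "a \<noteq> 0" "b \<noteq> 0" using eq that by (simp add: upto_family_def)
  ultimately show "a = b" by (cases "a = 0") auto
qed

lemma indexed_family_upto_family: "indexed_family upto_family"
proof -
  let ?f = "rf_mul (Proj 1) (rf_add (rf_sub (cnst 1) (Proj 2)) (rf_sub (Proj 2) (Proj 1)))"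
  have f: "eval ?f [z, n, x] (n * ((1 - x) + (x - n)))" for z n x
    by (intro eval_rf_mul eval_rf_add eval_rf_sub eval_cnst eval_Proj1 eval_Proj2)
  have member: "x \<in> upto_family n \<longleftrightarrow> n * ((1 - x) + (x - n)) = 0" for n x
    by (auto simp: upto_family_def)
  have "x \<in> upto_family n \<longleftrightarrow> (\<exists>v. eval (Mn ?f) [n, x] v)" for n x
  proof
    assume "x \<in> upto_family n"
    hence "eval (Mn ?f) [n, x] 0" using f[of 0 n x] member by (intro eval_Mn) auto
    thus "\<exists>v. eval (Mn ?f) [n, x] v" ..
  next
    assume "\<exists>v. eval (Mn ?f) [n, x] v"
    then obtain v where "eval ?f [v, n, x] 0" by (auto elim: eval_MnE)
    thus "x \<in> upto_family n" using f[of v n x] member eval_deterministic by blast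
  qed
  thus ?thesis unfolding indexed_family_def by blast
qed

definition answer_bit :: "qlog \<Rightarrow> nat \<Rightarrow> nat" where
  "answer_bit l j = (if j < length l \<and> snd (l ! j) then 1 else 0)"

lemma eval_answer_bit:
  assumes "eval j xs n" "eval a xs (enc_log l)"
  shows "eval (rf_snd (rf_nth j a)) xs (answer_bit l n)"
  using eval_rf_snd[OF eval_rf_nth[OF assms(1) assms(2)[unfolded enc_log_def]]]
  by (cases "n < length l") (auto simp: answer_bit_def prod_decode_0 split: prod.splits)

lemma eval_length_log: "eval a xs (enc_log l) \<Longrightarrow> eval (rf_length a) xs (length l)"
  using eval_rf_length unfolding enc_log_def by fastforce

(* Queries 0, 1, 2, ... in turn: a positive answer for 0 identifies the index 0, and the first
   negative answer, to n + 1, identifies the index n. *)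
definition upto_learner_output :: "qlog \<Rightarrow> nat" where
  "upto_learner_output l =
    (if l = [] then 2 * 0 + 1
     else if snd (hd l) then 2 * 0
     else if length l = 1 \<or> snd (last l) then 2 * length l + 1
     else 2 * (length l - 2))"

definition upto_learner :: recf where
  "upto_learner =
    (let len = rf_length (Proj 1); answer = (\<lambda>j. rf_snd (rf_nth j (Proj 1))) in
     rf_if0 len (cnst 1)
      (rf_if0 (rf_sub (cnst 1) (answer (cnst 0))) (cnst 0)
        (rf_if0 (rf_mul (rf_sub (cnst 1) (answer (rf_sub len (cnst 1)))) (rf_sub len (cnst 1)))
          (rf_add (rf_mul (cnst 2) len) (cnst 1))
          (rf_mul (cnst 2) (rf_sub len (cnst 2))))))"

lemma eval_upto_learner: "eval upto_learner [s, enc_log l] (upto_learner_output l)"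
proof -
  have log: "eval (Proj 1) [s, enc_log l] (enc_log l)" by (rule eval_Proj1)
  have len: "eval (rf_length (Proj 1)) [s, enc_log l] (length l)"
    by (rule eval_length_log[OF log])
  have "eval upto_learner [s, enc_log l]
    (if length l = 0 then 1
     else if 1 - answer_bit l 0 = 0 then 0
     else if (1 - answer_bit l (length l - 1)) * (length l - 1) = 0 then 2 * length l + 1
     else 2 * (length l - 2))"
    unfolding upto_learner_def Let_def
    by (intro eval_rf_if0 eval_rf_add eval_rf_mul eval_rf_sub eval_cnst eval_answer_bit len log)
  moreover have "l \<noteq> [] \<Longrightarrow> hd l = l ! 0" "l \<noteq> [] \<Longrightarrow> last l = l ! (length l - 1)"
    by (simp_all add: hd_conv_nth last_conv_nth)
  ultimately show ?thesis
    unfolding upto_learner_output_def answer_bit_def by (cases "length l") (auto split: if_splits)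
qed

definition answer_log :: "nat set \<Rightarrow> nat \<Rightarrow> qlog" where
  "answer_log A k = map (\<lambda>x. (x, x \<in> A)) [0..<k]"

lemma length_answer_log [simp]: "length (answer_log A k) = k"
  by (simp add: answer_log_def)

lemma qrun_answer_log:
  assumes queries: "\<And>j. k \<le> j \<Longrightarrow> j < K \<Longrightarrow> eval e [list_encode \<sigma>, enc_log (answer_log A j)] (2 * j + 1)"
    and hyp: "eval e [list_encode \<sigma>, enc_log (answer_log A K)] (2 * h)" and "k \<le> K"
  shows "qrun e A \<sigma> (answer_log A k) (answer_log A K) h"
  using \<open>k \<le> K\<close>
proof (induction k rule: inc_induct)
  case base show ?case using hyp by (rule qrun_hyp)
next
  case (step j)
  have "answer_log A (Suc j) = answer_log A j @ [(j, j \<in> A)]" by (simp add: answer_log_def)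
  with step.IH have "qrun e A \<sigma> (answer_log A j @ [(j, j \<in> A)]) (answer_log A K) h" by simp
  with queries[OF step.hyps] show ?case by (rule qrun_query)
qed

lemma upto_learner_output_answer_log:
  assumes "1 \<le> n"
  shows "j \<le> n + 1 \<Longrightarrow> upto_learner_output (answer_log (upto_family n) j) = 2 * j + 1"
    and "upto_learner_output (answer_log (upto_family n) (n + 2)) = 2 * n"
  using assms by (auto simp: upto_learner_output_def answer_log_def upto_family_def hd_map last_map)

lemma upto_learner_output_answer_log_UNIV:
  "upto_learner_output (answer_log UNIV 0) = 2 * 0 + 1"
  "upto_learner_output (answer_log UNIV 1) = 2 * 0"
  by (simp_all add: upto_learner_output_def answer_log_def)

lemma PMC_O_learnable_upto_family: "PMC_O_learnable upto_family"
  unfolding PMC_O_learnable_def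
proof (intro exI[of _ upto_learner] exI[of _ "[:2, 1:]"] ballI allI impI)
  fix F and f :: "nat \<Rightarrow> nat" assume "F \<in> range upto_family"
  then obtain n where F: "F = upto_family n" by blast
  define K where "K = (if n = 0 then 1 else n + 2)"
  have outputs: "upto_learner_output (answer_log F j) = 2 * j + 1" if "j < K" for j
    using that upto_learner_output_answer_log(1)[of n j] upto_learner_output_answer_log_UNIV
    by (cases "n = 0") (simp_all add: F K_def upto_family_def)
  have final_output: "upto_learner_output (answer_log F K) = 2 * n"
    using upto_learner_output_answer_log(2)[of n] upto_learner_output_answer_log_UNIV
    by (cases "n = 0") (simp_all add: F K_def upto_family_def)
  have runs: "qrun upto_learner F \<sigma> (answer_log F k) (answer_log F K) n" if "k \<le> K" for \<sigma> k
    using that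
  proof (rule qrun_answer_log[rotated 2])
    show "eval upto_learner [list_encode \<sigma>, enc_log (answer_log F j)] (2 * j + 1)" if "j < K" for j
      using eval_upto_learner[of _ "answer_log F j"] outputs[OF that] by simp
    show "eval upto_learner [list_encode \<sigma>, enc_log (answer_log F K)] (2 * n)"
      using eval_upto_learner[of _ "answer_log F K"] final_output by simp
  qed
  have first_round: "qrun upto_learner F \<sigma> [] (answer_log F K) n" for \<sigma>
    using runs[of 0 \<sigma>] by (simp add: answer_log_def)
  have later_rounds: "qrun upto_learner F \<sigma> (answer_log F K) (answer_log F K) n" for \<sigma>
    using runs[of K \<sigma>] by simp
  define L where "L = (\<lambda>i::nat. if i = 0 then [] else answer_log F K)"
  have "\<forall>i. qrun upto_learner F (seg f i) (L i) (L (Suc i)) n"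
    using first_round later_rounds by (simp add: L_def)
  moreover have "good_stream upto_family F [:2, 1:] (\<lambda>_. n)"
    unfolding good_stream_def using F by simp
  moreover have "\<forall>i. length (L i) \<le> poly [:2, 1:] (mi upto_family F)"
    by (simp add: L_def K_def F mi_inj[OF inj_upto_family])
  ultimately show "\<exists>L g. L 0 = [] \<and> (\<forall>i. qrun upto_learner F (seg f i) (L i) (L (Suc i)) (g i)) \<and>
      good_stream upto_family F [:2, 1:] g \<and> (\<forall>i. length (L i) \<le> poly [:2, 1:] (mi upto_family F))"
    by (intro exI[of _ L] exI[of _ "\<lambda>_. n"]) (simp add: L_def)
qed

section \<open>Mind changes and locking sequences\<close>

lemma exists_change_between:
  assumes "a \<le> b" "g a \<noteq> g b"
  shows "\<exists>i. a \<le> i \<and> i < b \<and> g i \<noteq> g (Suc i)"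
  using assms
proof (induction b)
  case (Suc b)
  show ?case
  proof (cases "a = Suc b")
    case False
    with Suc.prems have "a \<le> b" by simp
    show ?thesis
    proof (cases "g b = g (Suc b)")
      case True
      with Suc.IH \<open>a \<le> b\<close> Suc.prems(2) show ?thesis using less_SucI by metis
    qed (use \<open>a \<le> b\<close> in auto)
  qed (use Suc.prems in simp)
qed simp

lemma card_changes_ge:
  fixes g :: "nat \<Rightarrow> 'a" and a :: "nat \<Rightarrow> nat"
  assumes "mono a" and change: "\<And>j. j < n \<Longrightarrow> g (a j) \<noteq> g (a (Suc j))"
  shows "n \<le> card {i. a 0 \<le> i \<and> i < a n \<and> g i \<noteq> g (Suc i)}"
  using change
proof (induction n)
  case (Suc n)
  let ?C = "\<lambda>n. {i. a 0 \<le> i \<and> i < a n \<and> g i \<noteq> g (Suc i)}"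
  have "a 0 \<le> a n" "a n \<le> a (Suc n)" using \<open>mono a\<close> by (simp_all add: monoD)
  then obtain c where c: "a n \<le> c" "c < a (Suc n)" "g c \<noteq> g (Suc c)"
    using exists_change_between Suc.prems[of n] by blast
  have fin: "finite (?C n)" by (rule finite_subset[of _ "{..<a n}"]) auto
  have "insert c (?C n) \<subseteq> ?C (Suc n)" using c \<open>a 0 \<le> a n\<close> by auto
  moreover have "finite (?C (Suc n))" by (rule finite_subset[of _ "{..<a (Suc n)}"]) auto
  ultimately have "card (insert c (?C n)) \<le> card (?C (Suc n))" by (rule card_mono[rotated])
  moreover have "c \<notin> ?C n" using c by auto
  ultimately have "Suc (card (?C n)) \<le> card (?C (Suc n))" using fin by simp
  with Suc show ?case by simp
qed simp

lemma finite_changes_eventually_const: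
  fixes g :: "nat \<Rightarrow> 'a"
  assumes "finite {i. g i \<noteq> g (Suc i)}"
  shows "\<exists>N. \<forall>i\<ge>N. g i = g N"
proof -
  obtain N where N: "\<And>i. g i \<noteq> g (Suc i) \<Longrightarrow> i < N"
    using assms unfolding finite_nat_set_iff_bounded by blast
  have "g i = g N" if "N \<le> i" for i
    using that
  proof (induction i rule: dec_induct)
    case (step m)
    with N[of m] show ?case by fastforce
  qed simp
  thus ?thesis by blast
qed

lemma good_stream_limit:
  assumes "good_stream fam F p g"
  obtains N where "\<forall>i\<ge>N. g i = g N" and "fam (g N) = F"
proof -
  have fin: "finite {i. g i \<noteq> g (Suc i)}" and limit: "\<And>v. infinite {i. g i = v} \<Longrightarrow> fam v = F"
    using assms by (simp_all add: good_stream_def)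
  obtain N where N: "\<forall>i\<ge>N. g i = g N"
    using finite_changes_eventually_const[OF fin] by blast
  hence "{N..} \<subseteq> {i. g i = g N}" by blast
  hence "infinite {i. g i = g N}" by (rule infinite_super[OF _ infinite_Ici])
  with N limit show ?thesis by (intro that)
qed

definition prepend :: "nat list \<Rightarrow> (nat \<Rightarrow> nat) \<Rightarrow> nat \<Rightarrow> nat" where
  "prepend \<sigma> u n = (if n < length \<sigma> then \<sigma> ! n else u (n - length \<sigma>))"

lemma range_prepend: "range (prepend \<sigma> u) = set \<sigma> \<union> range u"
proof
  show "range (prepend \<sigma> u) \<subseteq> set \<sigma> \<union> range u"
    by (auto simp: prepend_def)
  have "\<sigma> ! n \<in> range (prepend \<sigma> u)" if "n < length \<sigma>" for n
    using that rangeI[of "prepend \<sigma> u" n] by (simp add: prepend_def)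
  moreover have "u d \<in> range (prepend \<sigma> u)" for d
    using rangeI[of "prepend \<sigma> u" "length \<sigma> + d"] by (simp add: prepend_def)
  ultimately show "set \<sigma> \<union> range u \<subseteq> range (prepend \<sigma> u)"
    by (auto simp: in_set_conv_nth)
qed

lemma seg_prepend: "seg (prepend \<sigma> u) (length \<sigma> + d) = \<sigma> @ seg u d"
proof -
  have "[0..<length \<sigma> + d] = [0..<length \<sigma>] @ [length \<sigma>..<length \<sigma> + d]"
    by (rule upt_add_eq_append) simp
  moreover have "[length \<sigma>..<length \<sigma> + d] = map (\<lambda>i. i + length \<sigma>) [0..<d]"
    by (simp add: map_add_upt add.commute)
  moreover have "map (prepend \<sigma> u) [0..<length \<sigma>] = \<sigma>"
    by (rule nth_equalityI) (simp_all add: prepend_def)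
  ultimately show ?thesis by (simp add: seg_def prepend_def)
qed

lemma seg_prefix: assumes "prefix \<sigma> (seg f i)" shows "seg f (length \<sigma>) = \<sigma>"
proof -
  have "length \<sigma> \<le> i" using prefix_length_le[OF assms] by (simp add: seg_def)
  hence "seg f (length \<sigma>) = take (length \<sigma>) (seg f i)" by (simp add: seg_def take_map)
  thus ?thesis using assms by (metis append_eq_conv_conj prefix_def)
qed

lemma locking_extension:
  assumes learns: "\<And>f. range f = F \<Longrightarrow>
      \<exists>g. (\<forall>i. eval e [list_encode (seg f i)] (g i)) \<and> good_stream fam F p g"
    and "set \<sigma> \<subseteq> F" "F \<noteq> {}"
  obtains \<tau> h where "prefix \<sigma> \<tau>" "set \<tau> \<subseteq> F" "eval e [list_encode \<tau>] h" "fam h = F"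
proof -
  let ?f = "prepend \<sigma> (from_nat_into F)"
  have "range ?f = F"
    using assms(2,3) by (auto simp: range_prepend range_from_nat_into[OF _ countableI_type])
  with learns obtain g where g: "\<forall>i. eval e [list_encode (seg ?f i)] (g i)" "good_stream fam F p g"
    by blast
  obtain N where N: "\<forall>i\<ge>N. g i = g N" "fam (g N) = F"
    using good_stream_limit[OF g(2)] by blast
  let ?\<tau> = "seg ?f (length \<sigma> + N)"
  have "prefix \<sigma> ?\<tau>" by (simp add: seg_prepend)
  moreover have "set ?\<tau> \<subseteq> F" using \<open>range ?f = F\<close> by (auto simp: seg_def)
  moreover have "eval e [list_encode ?\<tau>] (g N)" using g(1) N(1) by (metis le_add2)
  ultimately show ?thesis using N(2) by (rule that)
qed

lemma upto_family_mono: "1 \<le> a \<Longrightarrow> a \<le> b \<Longrightarrow> upto_family a \<subseteq> upto_family b"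
  by (auto simp: upto_family_def)

lemma upto_family_locking_chain:
  assumes learns: "\<forall>F \<in> range upto_family. \<forall>f. range f = F \<longrightarrow>
      (\<exists>g. (\<forall>i. eval e [list_encode (seg f i)] (g i)) \<and> good_stream upto_family F p g)"
  obtains chain where "\<And>j. eval e [list_encode (chain j)] (Suc j)"
    and "\<And>j. prefix (chain j) (chain (Suc j))"
proof -
  have lock: "\<exists>\<tau>. prefix \<sigma> \<tau> \<and> set \<tau> \<subseteq> upto_family k \<and> eval e [list_encode \<tau>] k"
    if "1 \<le> k" "set \<sigma> \<subseteq> upto_family k" for \<sigma> k
  proof -
    have "upto_family k \<noteq> {}" using that by (auto simp: upto_family_def)
    moreover have "\<exists>g. (\<forall>i. eval e [list_encode (seg f i)] (g i)) \<and> good_stream upto_family (upto_family k) p g"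
      if "range f = upto_family k" for f
      using learns that by blast
    ultimately obtain \<tau> h where "prefix \<sigma> \<tau>" "set \<tau> \<subseteq> upto_family k"
        "eval e [list_encode \<tau>] h" "upto_family h = upto_family k"
      using locking_extension \<open>set \<sigma> \<subseteq> upto_family k\<close> by metis
    thus ?thesis using injD[OF inj_upto_family] by metis
  qed
  have "\<exists>chain. \<forall>j. (set (chain j) \<subseteq> upto_family (Suc j) \<and> eval e [list_encode (chain j)] (Suc j))
      \<and> prefix (chain j) (chain (Suc j))"
  proof (rule dependent_nat_choice)
    show "\<exists>\<tau>. set \<tau> \<subseteq> upto_family (Suc 0) \<and> eval e [list_encode \<tau>] (Suc 0)"
      using lock[of 1 "[]"] by auto
    fix \<sigma> j assume "set \<sigma> \<subseteq> upto_family (Suc j) \<and> eval e [list_encode \<sigma>] (Suc j)"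
    hence "set \<sigma> \<subseteq> upto_family (Suc (Suc j))" using upto_family_mono[of "Suc j" "Suc (Suc j)"] by auto
    thus "\<exists>\<tau>. (set \<tau> \<subseteq> upto_family (Suc (Suc j)) \<and> eval e [list_encode \<tau>] (Suc (Suc j)))
        \<and> prefix \<sigma> \<tau>"
      using lock[of "Suc (Suc j)" \<sigma>] by auto
  qed
  then obtain chain where "\<And>j. eval e [list_encode (chain j)] (Suc j)"
    "\<And>j. prefix (chain j) (chain (Suc j))"
    by blast
  thus ?thesis by (rule that)
qed

lemma not_PMC_learnable_upto_family: "\<not> PMC_learnable upto_family"
proof
  assume "PMC_learnable upto_family"
  then obtain e p where learns: "\<forall>F \<in> range upto_family. \<forall>f. range f = F \<longrightarrow>
      (\<exists>g. (\<forall>i. eval e [list_encode (seg f i)] (g i)) \<and> good_stream upto_family F p g)"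
    unfolding PMC_learnable_def by blast
  then obtain chain where chain: "\<And>j. eval e [list_encode (chain j)] (Suc j)"
    "\<And>j. prefix (chain j) (chain (Suc j))"
    using upto_family_locking_chain[OF learns] by blast
  define c where "c = poly p 0"
  define f where "f = prepend (chain (Suc c)) id"
  have "range f = upto_family 0" by (simp add: f_def range_prepend upto_family_def)
  with learns obtain g where g: "\<forall>i. eval e [list_encode (seg f i)] (g i)"
      "good_stream upto_family (upto_family 0) p g"
    by blast
  have "mono (\<lambda>j. length (chain j))"
    unfolding mono_iff_le_Suc using chain(2) by (simp add: prefix_length_le)
  moreover have outputs: "g (length (chain j)) = Suc j" if "j \<le> Suc c" for j
  proof -
    have "seg f (length (chain (Suc c))) = chain (Suc c)"
      using seg_prepend[of "chain (Suc c)" id 0] by (simp add: f_def seg_def)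
    moreover have "prefix (chain j) (chain (Suc c))"
      using prefix_order.lift_Suc_mono_le[of chain, OF chain(2) that] .
    ultimately have "seg f (length (chain j)) = chain j"
      by (intro seg_prefix[of _ f "length (chain (Suc c))"]) simp
    thus ?thesis using g(1) chain(1) eval_deterministic by metis
  qed
  ultimately have "Suc c \<le> card {i. length (chain 0) \<le> i \<and> i < length (chain (Suc c)) \<and> g i \<noteq> g (Suc i)}"
    by (intro card_changes_ge) auto
  also have "\<dots> \<le> card {i. g i \<noteq> g (Suc i)}"
    using g(2) by (intro card_mono) (auto simp: good_stream_def)
  also have "\<dots> \<le> c"
    using g(2) by (simp add: good_stream_def c_def mi_inj[OF inj_upto_family])
  finally show False by simp
qed

section \<open>Replaying the rounds of an oracle learner\<close>

lemma eval_rf_take_log: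
  "eval k xs n \<Longrightarrow> eval a xs (enc_log l) \<Longrightarrow> n \<le> length l \<Longrightarrow> eval (rf_take k a) xs (enc_log (take n l))"
  using eval_rf_take[of k xs n a "map (\<lambda>(x, b). prod_encode (x, if b then 1 else 0)) l"]
  unfolding enc_log_def by (simp add: take_map)

lemma qrunD:
  "qrun e A D m m' h \<Longrightarrow> prefix m m' \<and>
     (\<forall>q. length m \<le> q \<and> q < length m' \<longrightarrow> (\<exists>x. eval e [list_encode D, enc_log (take q m')] (2 * x + 1))) \<and>
     eval e [list_encode D, enc_log m'] (2 * h)"
proof (induction rule: qrun.induct)
  case (qrun_query e \<sigma> l x A l' h)
  have "prefix l l'" using qrun_query.IH prefix_order.order_trans[of l "l @ [(x, x \<in> A)]" l'] by simp
  moreover have "\<exists>x. eval e [list_encode \<sigma>, enc_log (take q l')] (2 * x + 1)"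
    if "length l \<le> q" "q < length l'" for q
  proof (cases "q = length l")
    case True
    hence "take q l' = l" using \<open>prefix l l'\<close> by (metis append_eq_conv_conj prefix_def)
    thus ?thesis using qrun_query.hyps(1) by auto
  next
    case False thus ?thesis using qrun_query.IH that by simp
  qed
  ultimately show ?case using qrun_query.IH by blast
qed auto

locale replay =
  fixes e t :: recf and T :: "nat list \<Rightarrow> qlog \<Rightarrow> nat list"
  assumes eval_teacher: "\<And>\<sigma> l. eval t [list_encode \<sigma>, enc_log l] (list_encode (T \<sigma> l))"
begin

definition round_output :: recf where
  "round_output =
    Comp e [Comp t [rf_take (Proj 2) (Proj 3), rf_take (Proj 1) (Proj 4)],
      rf_take (rf_add (Proj 1) (Proj 0)) (Proj 4)]"

lemma eval_round_output:
  assumes "j \<le> length \<sigma>" "a + n \<le> length l"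
    and "eval e [list_encode (T (take j \<sigma>) (take a l)), enc_log (take (a + n) l)] v"
  shows "eval round_output [n, a, j, list_encode \<sigma>, enc_log l] v"
proof -
  let ?E = "[n, a, j, list_encode \<sigma>, enc_log l]"
  have "eval (rf_take (Proj 2) (Proj 3)) ?E (list_encode (take j \<sigma>))"
    using eval_Proj2 eval_Proj3 \<open>j \<le> length \<sigma>\<close> by (rule eval_rf_take)
  moreover have "eval (rf_take (Proj 1) (Proj 4)) ?E (enc_log (take a l))"
    using eval_Proj1 eval_Proj4 by (rule eval_rf_take_log) (use assms(2) in simp)
  moreover have "eval (rf_take (rf_add (Proj 1) (Proj 0)) (Proj 4)) ?E (enc_log (take (a + n) l))"
    using eval_rf_add[OF eval_Proj1 eval_Proj0] eval_Proj4 assms(2) by (rule eval_rf_take_log)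
  ultimately show ?thesis unfolding round_output_def
    using assms(3) by (intro eval_Comp_binary[OF eval_Comp_binary[OF _ _ eval_teacher]])
qed

(* On arguments [a, j, \<sigma>, l]: round j of the simulated learner, on data take j \<sigma>, starts with
   the first a entries of the log l, and ends after the least n for which the simulated learner
   outputs a hypothesis on the first a + n entries of l. *)
definition round_end :: recf where
  "round_end = rf_add (Proj 0) (Mn (rf_mod2 round_output))"

lemma eval_round_end:
  assumes run: "qrun e A (T (take j \<sigma>) m) m m' h" and "prefix m' l" and "j \<le> length \<sigma>"
  shows "eval round_end [length m, j, list_encode \<sigma>, enc_log l] (length m')"
proof -
  let ?D = "T (take j \<sigma>) m"
  have "prefix m m'" and queries: "\<And>q. length m \<le> q \<Longrightarrow> q < length m' \<Longrightarrow>
      \<exists>x. eval e [list_encode ?D, enc_log (take q m')] (2 * x + 1)"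
    and hyp: "eval e [list_encode ?D, enc_log m'] (2 * h)"
    using qrunD[OF run] by blast+
  have "length m \<le> length m'" "length m' \<le> length l"
    using \<open>prefix m m'\<close> \<open>prefix m' l\<close> by (simp_all add: prefix_length_le)
  have take_l: "take q l = take q m'" if "q \<le> length m'" for q
    using \<open>prefix m' l\<close> that by (metis append_eq_conv_conj prefix_def take_take min.absorb1)
  have "take (length m) l = m"
    using \<open>prefix m m'\<close> take_l[OF \<open>length m \<le> length m'\<close>] by (metis append_eq_conv_conj prefix_def)
  have parity: "eval (rf_mod2 round_output) [n, length m, j, list_encode \<sigma>, enc_log l] (v mod 2)"
    if "length m + n \<le> length m'" "eval e [list_encode ?D, enc_log (take (length m + n) m')] v" for n v
    using that \<open>j \<le> length \<sigma>\<close> \<open>length m' \<le> length l\<close> \<open>take (length m) l = m\<close> take_l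
    by (intro eval_rf_mod2 eval_round_output) simp_all
  have "eval (Mn (rf_mod2 round_output)) [length m, j, list_encode \<sigma>, enc_log l] (length m' - length m)"
  proof (rule eval_Mn)
    show "eval (rf_mod2 round_output) [length m' - length m, length m, j, list_encode \<sigma>, enc_log l] 0"
      using parity[of "length m' - length m" "2 * h"] hyp \<open>length m \<le> length m'\<close> by simp
    show "\<forall>n<length m' - length m.
        \<exists>r. eval (rf_mod2 round_output) [n, length m, j, list_encode \<sigma>, enc_log l] r \<and> r \<noteq> 0"
    proof (intro allI impI)
      fix n assume "n < length m' - length m"
      moreover obtain x where "eval e [list_encode ?D, enc_log (take (length m + n) m')] (2 * x + 1)"
        using queries \<open>n < length m' - length m\<close> by fastforce
      ultimately have "eval (rf_mod2 round_output) [n, length m, j, list_encode \<sigma>, enc_log l] ((2 * x + 1) mod 2)"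
        by (intro parity) simp_all
      thus "\<exists>r. eval (rf_mod2 round_output) [n, length m, j, list_encode \<sigma>, enc_log l] r \<and> r \<noteq> 0"
        by auto
    qed
  qed
  thus ?thesis unfolding round_end_def
    using eval_rf_add[OF eval_Proj0] \<open>length m \<le> length m'\<close> by fastforce
qed

definition replay_learner :: recf where
  "replay_learner = Comp e
    [Comp t [Proj 0, rf_take (Comp (Prec (cnst 0) round_end) [rf_length (Proj 0), Proj 0, Proj 1]) (Proj 1)],
     Proj 1]"

context
  fixes A :: "nat set" and f :: "nat \<Rightarrow> nat" and L :: "nat \<Rightarrow> qlog" and g :: "nat \<Rightarrow> nat"
  assumes L0: "L 0 = []"
    and run: "\<And>j. qrun e A (T (seg f j) (L j)) (L j) (L (Suc j)) (g j)"
begin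

lemma prefix_log_mono: "j \<le> j' \<Longrightarrow> prefix (L j) (L j')"
  using prefix_order.lift_Suc_mono_le[of L] run qrunD by blast

lemma eval_rounds:
  assumes "prefix (L i) l" and "j \<le> i"
  shows "eval (Prec (cnst 0) round_end) [j, list_encode (seg f i), enc_log l] (length (L j))"
  using eval_cnst[of 0] L0 \<open>j \<le> i\<close>
proof (intro eval_Prec_upto[where N = i and h = "\<lambda>j. length (L j)"])
  fix n assume "n < i"
  have "take n (seg f i) = seg f n" using \<open>n < i\<close> by (simp add: seg_def take_map)
  moreover have "prefix (L (Suc n)) l"
    using prefix_log_mono[of "Suc n" i] \<open>n < i\<close> \<open>prefix (L i) l\<close> prefix_order.order_trans by auto
  ultimately show "eval round_end [length (L n), n, list_encode (seg f i), enc_log l] (length (L (Suc n)))"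
    using run[of n] \<open>n < i\<close> by (intro eval_round_end) (simp_all add: seg_def)
qed simp_all

lemma eval_replay_learner:
  assumes "prefix (L i) l" and "eval e [list_encode (T (seg f i) (L i)), enc_log l] v"
  shows "eval replay_learner [list_encode (seg f i), enc_log l] v"
proof -
  let ?E = "[list_encode (seg f i), enc_log l]"
  have "eval (rf_length (Proj 0)) ?E i"
    using eval_rf_length[OF eval_Proj0, of "seg f i"] by (simp add: seg_def)
  hence "eval (Comp (Prec (cnst 0) round_end) [rf_length (Proj 0), Proj 0, Proj 1]) ?E (length (L i))"
    using eval_Proj0 eval_Proj1 eval_rounds[OF assms(1) order_refl] by (rule eval_Comp_ternary)
  hence "eval (rf_take (Comp (Prec (cnst 0) round_end) [rf_length (Proj 0), Proj 0, Proj 1]) (Proj 1)) ?E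
      (enc_log (L i))"
    using eval_rf_take_log[OF _ eval_Proj1] prefix_length_le[OF assms(1)] assms(1)
    by (metis append_eq_conv_conj prefix_def)
  thus ?thesis unfolding replay_learner_def
    using eval_Proj0 eval_teacher eval_Proj1 assms(2)
    by (intro eval_Comp_binary[OF eval_Comp_binary]) auto
qed

lemma qrun_replay_learner:
  "qrun e' A' D m m' h \<Longrightarrow> e' = e \<Longrightarrow> D = T (seg f i) (L i) \<Longrightarrow> prefix (L i) m \<Longrightarrow>
   qrun replay_learner A' (seg f i) m m' h"
proof (induction rule: qrun.induct)
  case (qrun_hyp e' \<sigma> l h A')
  thus ?case using eval_replay_learner by (blast intro: qrun.qrun_hyp)
next
  case (qrun_query e' \<sigma> l x A' l' h)
  have "prefix (L i) (l @ [(x, x \<in> A')])"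
    using qrun_query.prems(3) prefix_order.order_trans by fastforce
  with qrun_query have "qrun replay_learner A' (seg f i) (l @ [(x, x \<in> A')]) l' h" by blast
  moreover have "eval replay_learner [list_encode (seg f i), enc_log l] (2 * x + 1)"
    using eval_replay_learner qrun_query.hyps(1) qrun_query.prems by blast
  ultimately show ?case by (rule qrun.qrun_query[rotated])
qed

end

end

lemma PMC_TO_learnable_imp_PMC_O_learnable:
  assumes "PMC_TO_learnable fam" shows "PMC_O_learnable fam"
proof -
  obtain e p T where "oteacher T" and learns: "\<forall>F \<in> range fam. \<forall>f. range f = F \<longrightarrow>
     (\<exists>L g. L 0 = [] \<and> (\<forall>i. qrun e F (T (seg f i) (L i)) (L i) (L (Suc i)) (g i)) \<and>
            good_stream fam F p g \<and> (\<forall>i. length (L i) \<le> poly p (mi fam F)))"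
    using assms unfolding PMC_TO_learnable_def by (elim exE conjE)
  from \<open>oteacher T\<close> obtain t where "\<And>\<sigma> l. eval t [list_encode \<sigma>, enc_log l] (list_encode (T \<sigma> l))"
    unfolding oteacher_def by (elim exE conjE) blast
  then interpret replay e t T by unfold_locales
  show ?thesis unfolding PMC_O_learnable_def
  proof (intro exI[of _ replay_learner] exI[of _ p] ballI allI impI)
    fix F and f :: "nat \<Rightarrow> nat" assume "F \<in> range fam" "range f = F"
    from learns[rule_format, OF this] obtain L g where L0: "L 0 = []"
      and run: "\<forall>i. qrun e F (T (seg f i) (L i)) (L i) (L (Suc i)) (g i)"
      and "good_stream fam F p g" "\<forall>i. length (L i) \<le> poly p (mi fam F)"
      by (elim exE conjE)
    moreover have "qrun replay_learner F (seg f i) (L i) (L (Suc i)) (g i)" for i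
      using qrun_replay_learner[OF L0 run[rule_format] run[rule_format, of i]] by simp
    ultimately show "\<exists>L g. L 0 = [] \<and> (\<forall>i. qrun replay_learner F (seg f i) (L i) (L (Suc i)) (g i)) \<and>
        good_stream fam F p g \<and> (\<forall>i. length (L i) \<le> poly p (mi fam F))"
      by blast
  qed
qed

theorem theorem5p4:
  shows "PMC = PMC_T \<and> PMC_T \<subset> PMC_O \<and> PMC_O = PMC_TO"
proof (intro conjI)
  show "PMC = PMC_T"
    unfolding PMC_def PMC_T_def
    using PMC_learnable_imp_PMC_T_learnable PMC_T_learnable_imp_PMC_learnable by blast
  show "PMC_O = PMC_TO"
    unfolding PMC_O_def PMC_TO_def
    using PMC_O_learnable_imp_PMC_TO_learnable PMC_TO_learnable_imp_PMC_O_learnable by blast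
  have "PMC_T \<subseteq> PMC_O"
    unfolding PMC_T_def PMC_O_def
    using PMC_T_learnable_imp_PMC_learnable PMC_learnable_imp_PMC_O_learnable by blast
  moreover have "upto_family \<in> PMC_O - PMC_T"
    unfolding PMC_O_def PMC_T_def
    using indexed_family_upto_family PMC_O_learnable_upto_family not_PMC_learnable_upto_family
      PMC_T_learnable_imp_PMC_learnable by blast
  ultimately show "PMC_T \<subset> PMC_O" by blast
qed

end
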